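(* Let $O_1(\mathbf v,d)=HC_F(\mathbf v,d)\setminus(\hat\ell_1\cup\hat\ell_2\cup\hat\ell_4)$. Then the closure of $\alpha(O_1(\mathbf v,d))$ in $\mathbb{C}P^2$ is contained in $V(\mathbf v,d)$, and $\alpha$ restricts to a rational map $\alpha:HC_F(\mathbf v,d)\dashrightarrow V(\mathbf v,d)$.
   Context: On $\mathbb{C}P^4$ use homogeneous coordinates $[w_0,w_1,w_2,w_3,x_1]$; let $Y$ be the surface $w_0w_3-w_1w_2=0$, $x_1^2+w_0w_3=0$. For parameters $[\mathbf v,d]=[v_{11},v_{12},v_{21},v_{22},d]\in\mathbb{C}P^4$ (complex, not all zero) set $a_1=v_{11}-v_{21}-d$, $a_2=-v_{11}-v_{21}+d$, $a_3=v_{11}+v_{21}+d$, $a_4=-v_{11}+v_{21}-d$, and let $HC_F(\mathbf v,d)$ be the set of points of $Y$ satisfying $2\big(v_{22}(w_3-w_0)-v_{12}(w_2-w_1)\big)x_1+a_1w_0w_1+a_2w_0w_2+a_3w_1w_3+a_4w_2w_3=0$. The lines $\hat\ell_1=\{[w_0,w_1,0,0,0]\}$, $\hat\ell_2=\{[w_0,0,w_2,0,0]\}$, $\hat\ell_4=\{[0,w_1,0,w_3,0]\}$ lie on $Y$. Define the rational map $\alpha:Y\dashrightarrow\mathbb{C}P^2$, $\alpha([w_0,w_1,w_2,w_3,x_1])=[w_3x_1,w_2x_1,w_2w_3]$ (defined where these three are not all zero). On $\mathbb{C}P^2$ with coordinates $[u_0,u_1,u_2]$ let $V(\mathbf v,d)$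 be the plane quartic curve $P=0$, where $P=a_4u_2^4+2(v_{22}u_0-v_{12}u_1)u_2^3-(a_3u_0^2+a_2u_1^2)u_2^2+2u_0u_1(v_{22}u_1-v_{12}u_0)u_2+a_1u_0^2u_1^2$. *)

theory Defs
  imports "HOL-Analysis.Analysis"
begin

type_synonym c5 = "complex \<times> complex \<times> complex \<times> complex \<times> complex"
type_synonym c3 = "complex \<times> complex \<times> complex"

text \<open>Points of CP^4 and CP^2 are complex lines through the origin, represented
  as the set of nonzero multiples of a nonzero representative.\<close>

definition proj4 :: "c5 \<Rightarrow> c5 set" where
  "proj4 w = (case w of (w0,w1,w2,w3,x1) \<Rightarrow>
     {(c*w0, c*w1, c*w2, c*w3, c*x1) | c. c \<noteq> 0})"

definition proj2 :: "c3 \<Rightarrow> c3 set" where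
  "proj2 u = (case u of (u0,u1,u2) \<Rightarrow> {(c*u0, c*u1, c*u2) | c. c \<noteq> 0})"

definition CP2 :: "c3 set set" where
  "CP2 = {proj2 u | u. u \<noteq> 0}"

definition CP2_topology :: "c3 set topology" where
  "CP2_topology = topology (\<lambda>U. U \<subseteq> CP2 \<and> open {u. u \<noteq> 0 \<and> proj2 u \<in> U})"

definition Y_eqs :: "c5 \<Rightarrow> bool" where
  "Y_eqs w = (case w of (w0,w1,w2,w3,x1) \<Rightarrow>
      w0*w3 - w1*w2 = 0 \<and> x1^2 + w0*w3 = 0)"

definition acoef :: "complex \<Rightarrow> complex \<Rightarrow> complex
   \<Rightarrow> complex \<times> complex \<times> complex \<times> complex" where
  "acoef v11 v21 d = (v11 - v21 - d, - v11 - v21 + d, v11 + v21 + d, - v11 + v21 - d)"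

definition HC_eq :: "complex \<Rightarrow> complex \<Rightarrow> complex \<Rightarrow> complex \<Rightarrow> complex \<Rightarrow> c5 \<Rightarrow> bool" where
  "HC_eq v11 v12 v21 v22 d w = (case w of (w0,w1,w2,w3,x1) \<Rightarrow>
     (case acoef v11 v21 d of (a1,a2,a3,a4) \<Rightarrow>
      2 * (v22*(w3 - w0) - v12*(w2 - w1)) * x1
        + a1*w0*w1 + a2*w0*w2 + a3*w1*w3 + a4*w2*w3 = 0))"

definition HC_F :: "complex \<Rightarrow> complex \<Rightarrow> complex \<Rightarrow> complex \<Rightarrow> complex \<Rightarrow> c5 set set" where
  "HC_F v11 v12 v21 v22 d =
     {proj4 w | w. w \<noteq> 0 \<and> Y_eqs w \<and> HC_eq v11 v12 v21 v22 d w}"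

definition line1 :: "c5 set set" where
  "line1 = {proj4 (w0,w1,0,0,0) | w0 w1. (w0,w1) \<noteq> (0,0)}"
definition line2 :: "c5 set set" where
  "line2 = {proj4 (w0,0,w2,0,0) | w0 w2. (w0,w2) \<noteq> (0,0)}"
definition line4 :: "c5 set set" where
  "line4 = {proj4 (0,w1,0,w3,0) | w1 w3. (w1,w3) \<noteq> (0,0)}"

definition O1 :: "complex \<Rightarrow> complex \<Rightarrow> complex \<Rightarrow> complex \<Rightarrow> complex \<Rightarrow> c5 set set" where
  "O1 v11 v12 v21 v22 d = HC_F v11 v12 v21 v22 d - (line1 \<union> line2 \<union> line4)"

definition alpha_rep :: "c5 \<Rightarrow> c3" where
  "alpha_rep w = (case w of (w0,w1,w2,w3,x1) \<Rightarrow> (w3*x1, w2*x1, w2*w3))"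

definition alpha_img :: "c5 set set \<Rightarrow> c3 set set" where
  "alpha_img S = {proj2 (alpha_rep w) | w. w \<noteq> 0 \<and> proj4 w \<in> S \<and> alpha_rep w \<noteq> 0}"

definition quarticP :: "complex \<Rightarrow> complex \<Rightarrow> complex \<Rightarrow> complex \<Rightarrow> complex \<Rightarrow> c3 \<Rightarrow> complex" where
  "quarticP v11 v12 v21 v22 d u = (case u of (u0,u1,u2) \<Rightarrow>
     (case acoef v11 v21 d of (a1,a2,a3,a4) \<Rightarrow>
       a4*u2^4 + 2*(v22*u0 - v12*u1)*u2^3 - (a3*u0^2 + a2*u1^2)*u2^2
       + 2*u0*u1*(v22*u1 - v12*u0)*u2 + a1*u0^2*u1^2))"

definition Vcurve :: "complex \<Rightarrow> complex \<Rightarrow> complex \<Rightarrow> complex \<Rightarrow> complex \<Rightarrow> c3 set set" where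
  "Vcurve v11 v12 v21 v22 d = {proj2 u | u. u \<noteq> 0 \<and> quarticP v11 v12 v21 v22 d u = 0}"

end

theory Submission
  imports Defs
begin

text \<open>On the surface Y the pull-back of the quartic along alpha factors as
  P(alpha(w)) = (w2 w3)^3 F(w), where F(w) = 0 is the equation cutting out HC_F inside Y.
  Hence alpha maps HC_F into the curve V, and since V is closed in CP^2 (the zero set of a
  homogeneous polynomial), it also contains the closure of the image of the open part O1.\<close>

lemma istopology_final:
  "istopology (\<lambda>U. U \<subseteq> S \<and> open {x. P x \<and> f x \<in> U})"
  unfolding istopology_def
proof (rule conjI; intro allI impI)
  fix U V assume "U \<subseteq> S \<and> open {x. P x \<and> f x \<in> U}" "V \<subseteq> S \<and> open {x. P x \<and> f x \<in> V}"
  moreover have "{x. P x \<and> f x \<in> U \<inter> V} = {x. P x \<and> f x \<in> U} \<inter> {x. P x \<and> f x \<in> V}"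
    by auto
  ultimately show "U \<inter> V \<subseteq> S \<and> open {x. P x \<and> f x \<in> U \<inter> V}"
    by (auto intro: open_Int)
next
  fix K assume K: "\<forall>U\<in>K. U \<subseteq> S \<and> open {x. P x \<and> f x \<in> U}"
  have "{x. P x \<and> f x \<in> \<Union>K} = (\<Union>U\<in>K. {x. P x \<and> f x \<in> U})"
    by auto
  moreover have "open (\<Union>U\<in>K. {x. P x \<and> f x \<in> U})"
    using K by (intro open_UN) blast
  ultimately show "\<Union>K \<subseteq> S \<and> open {x. P x \<and> f x \<in> \<Union>K}"
    using K by auto
qed

lemma openin_CP2_topology:
  "openin CP2_topology U \<longleftrightarrow> U \<subseteq> CP2 \<and> open {u. u \<noteq> 0 \<and> proj2 u \<in> U}"
  unfolding CP2_topology_def using istopology_final[of CP2 "\<lambda>u. u \<noteq> 0" proj2] by simp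

lemma topspace_CP2_topology: "topspace CP2_topology = CP2"
proof (rule subset_antisym)
  show "topspace CP2_topology \<subseteq> CP2"
    unfolding topspace_def openin_CP2_topology by blast
  have "{u. u \<noteq> 0 \<and> proj2 u \<in> CP2} = - {0}"
    by (auto simp: CP2_def)
  then have "openin CP2_topology CP2"
    by (simp add: openin_CP2_topology open_Compl)
  then show "CP2 \<subseteq> topspace CP2_topology"
    by (rule openin_subset)
qed

lemma mem_proj2_iff: "u' \<in> proj2 (a, b, e) \<longleftrightarrow> (\<exists>c. c \<noteq> 0 \<and> u' = (c*a, c*b, c*e))"
  unfolding proj2_def by auto

lemma mem_proj4_iff:
  "w' \<in> proj4 (w0, w1, w2, w3, x1) \<longleftrightarrow>
     (\<exists>c. c \<noteq> 0 \<and> w' = (c*w0, c*w1, c*w2, c*w3, c*x1))"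
  unfolding proj4_def by auto

lemma mem_proj2_self: "u \<in> proj2 u"
  by (cases u) (auto simp: mem_proj2_iff intro: exI[of _ 1])

lemma mem_proj4_self: "w \<in> proj4 w"
  by (cases w) (auto simp: mem_proj4_iff intro: exI[of _ 1])

lemma proj2_mem_zero_locus_iff:
  assumes scale: "\<And>c a b e. f (a, b, e) = 0 \<Longrightarrow> f (c*a, c*b, c*e) = 0"
    and "u \<noteq> 0"
  shows "proj2 u \<in> {proj2 u' | u'. u' \<noteq> 0 \<and> f u' = 0} \<longleftrightarrow> f u = 0"
proof
  assume "proj2 u \<in> {proj2 u' | u'. u' \<noteq> 0 \<and> f u' = 0}"
  then obtain a b e where eq: "proj2 u = proj2 (a, b, e)" and "f (a, b, e) = 0"
    by auto
  moreover have "u \<in> proj2 (a, b, e)"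
    using eq mem_proj2_self by metis
  ultimately show "f u = 0"
    using scale by (auto simp: mem_proj2_iff)
qed (use \<open>u \<noteq> 0\<close> in blast)

lemma closedin_CP2_zero_locus:
  fixes f :: "c3 \<Rightarrow> complex"
  assumes "continuous_on UNIV f"
    and scale: "\<And>c a b e. f (a, b, e) = 0 \<Longrightarrow> f (c*a, c*b, c*e) = 0"
  shows "closedin CP2_topology {proj2 u | u. u \<noteq> 0 \<and> f u = 0}"
    (is "closedin _ ?Z")
proof -
  have "?Z \<subseteq> CP2"
    unfolding CP2_def by auto
  have "u \<noteq> 0 \<and> proj2 u \<in> CP2 - ?Z \<longleftrightarrow> u \<in> - {0} \<inter> {u. f u \<noteq> 0}" for u
  proof -
    have "u \<noteq> 0 \<Longrightarrow> proj2 u \<in> CP2"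
      unfolding CP2_def by blast
    then show ?thesis
      using proj2_mem_zero_locus_iff[where f = f, OF scale] by blast
  qed
  then have "{u. u \<noteq> 0 \<and> proj2 u \<in> CP2 - ?Z} = - {0} \<inter> {u. f u \<noteq> 0}"
    by blast
  moreover have "open {u. f u \<noteq> 0}"
    using assms(1) by (intro open_Collect_neq continuous_intros) (auto intro: continuous_on_id)
  ultimately have "openin CP2_topology (CP2 - ?Z)"
    by (simp add: openin_CP2_topology open_Int open_Compl)
  then show ?thesis
    using \<open>?Z \<subseteq> CP2\<close> by (simp add: closedin_def topspace_CP2_topology)
qed

lemma quarticP_scale:
  "quarticP v11 v12 v21 v22 d (c*a, c*b, c*e) = c^4 * quarticP v11 v12 v21 v22 d (a, b, e)"
  unfolding quarticP_def acoef_def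
  by (simp add: algebra_simps power2_eq_square power3_eq_cube power4_eq_xxxx)

lemma continuous_on_quarticP: "continuous_on UNIV (quarticP v11 v12 v21 v22 d)"
  unfolding quarticP_def acoef_def case_prod_beta by (intro continuous_intros)

lemma closedin_Vcurve: "closedin CP2_topology (Vcurve v11 v12 v21 v22 d)"
  unfolding Vcurve_def
  by (rule closedin_CP2_zero_locus[OF continuous_on_quarticP]) (simp add: quarticP_scale)

lemma Y_eqs_scale:
  assumes "Y_eqs (w0, w1, w2, w3, x1)"
  shows "Y_eqs (c*w0, c*w1, c*w2, c*w3, c*x1)"
proof -
  have "c*w0*(c*w3) - c*w1*(c*w2) = c^2 * (w0*w3 - w1*w2)"
    and "(c*x1)^2 + c*w0*(c*w3) = c^2 * (x1^2 + w0*w3)"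
    by (simp_all add: power2_eq_square algebra_simps)
  with assms show ?thesis
    unfolding Y_eqs_def prod.case by (simp only: mult_zero_right)
qed

lemma HC_eq_scale:
  assumes "HC_eq v11 v12 v21 v22 d (w0, w1, w2, w3, x1)"
  shows "HC_eq v11 v12 v21 v22 d (c*w0, c*w1, c*w2, c*w3, c*x1)"
proof -
  obtain a1 a2 a3 a4 where a: "acoef v11 v21 d = (a1, a2, a3, a4)"
    by (cases "acoef v11 v21 d") auto
  have "2 * (v22*(c*w3 - c*w0) - v12*(c*w2 - c*w1)) * (c*x1)
        + a1*(c*w0)*(c*w1) + a2*(c*w0)*(c*w2) + a3*(c*w1)*(c*w3) + a4*(c*w2)*(c*w3)
      = c^2 * (2 * (v22*(w3 - w0) - v12*(w2 - w1)) * x1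
        + a1*w0*w1 + a2*w0*w2 + a3*w1*w3 + a4*w2*w3)"
    by (simp add: power2_eq_square algebra_simps)
  with assms show ?thesis
    unfolding HC_eq_def a prod.case by (simp only: mult_zero_right)
qed

lemma HC_F_memD:
  assumes "proj4 w \<in> HC_F v11 v12 v21 v22 d"
  shows "Y_eqs w \<and> HC_eq v11 v12 v21 v22 d w"
proof -
  obtain w0 w1 w2 w3 x1 where eq: "proj4 w = proj4 (w0, w1, w2, w3, x1)"
    and Y: "Y_eqs (w0, w1, w2, w3, x1)" and HC: "HC_eq v11 v12 v21 v22 d (w0, w1, w2, w3, x1)"
    using assms unfolding HC_F_def by auto
  have "w \<in> proj4 (w0, w1, w2, w3, x1)"
    using eq mem_proj4_self by metis
  then obtain c where "w = (c*w0, c*w1, c*w2, c*w3, c*x1)"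
    by (auto simp: mem_proj4_iff)
  with Y HC show ?thesis
    using Y_eqs_scale HC_eq_scale by simp
qed

lemma quartic_pullback_factor:
  fixes w0 w1 w2 w3 x1 p q a1 a2 a3 a4 :: complex
  assumes "w0*w3 - w1*w2 = 0" and "x1^2 + w0*w3 = 0"
  shows "a4*(w2*w3)^4 + 2*(p*(w3*x1) - q*(w2*x1))*(w2*w3)^3
       - (a3*(w3*x1)^2 + a2*(w2*x1)^2)*(w2*w3)^2
       + 2*(w3*x1)*(w2*x1)*(p*(w2*x1) - q*(w3*x1))*(w2*w3) + a1*(w3*x1)^2*(w2*x1)^2
     = (w2*w3)^3 * (2*(p*(w3 - w0) - q*(w2 - w1))*x1
         + a1*w0*w1 + a2*w0*w2 + a3*w1*w3 + a4*w2*w3)"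
  using assms by algebra

lemma quarticP_alpha_rep_eq_0:
  assumes "Y_eqs w" and "HC_eq v11 v12 v21 v22 d w"
  shows "quarticP v11 v12 v21 v22 d (alpha_rep w) = 0"
proof -
  obtain w0 w1 w2 w3 x1 where w: "w = (w0, w1, w2, w3, x1)"
    by (cases w) auto
  obtain a1 a2 a3 a4 where a: "acoef v11 v21 d = (a1, a2, a3, a4)"
    by (cases "acoef v11 v21 d") auto
  have "w0*w3 - w1*w2 = 0" and "x1^2 + w0*w3 = 0"
    using assms(1) unfolding w Y_eqs_def prod.case by blast+
  moreover have "2 * (v22*(w3 - w0) - v12*(w2 - w1)) * x1
      + a1*w0*w1 + a2*w0*w2 + a3*w1*w3 + a4*w2*w3 = 0"
    using assms(2) unfolding w HC_eq_def a prod.case .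
  ultimately show ?thesis
    unfolding w quarticP_def alpha_rep_def a prod.case
    by (simp only: quartic_pullback_factor mult_zero_right)
qed

lemma alpha_img_HC_F_subset_Vcurve:
  "alpha_img (HC_F v11 v12 v21 v22 d) \<subseteq> Vcurve v11 v12 v21 v22 d"
  unfolding alpha_img_def Vcurve_def
  using HC_F_memD quarticP_alpha_rep_eq_0 by blast

theorem lemma6p2:
  fixes v11 v12 v21 v22 d :: complex
  assumes "(v11, v12, v21, v22, d) \<noteq> 0"
  shows "CP2_topology closure_of (alpha_img (O1 v11 v12 v21 v22 d)) \<subseteq> Vcurve v11 v12 v21 v22 d
       \<and> alpha_img (HC_F v11 v12 v21 v22 d) \<subseteq> Vcurve v11 v12 v21 v22 d"
proof
  show HC_F_image: "alpha_img (HC_F v11 v12 v21 v22 d) \<subseteq> Vcurve v11 v12 v21 v22 d"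
    by (rule alpha_img_HC_F_subset_Vcurve)
  have "alpha_img (O1 v11 v12 v21 v22 d) \<subseteq> alpha_img (HC_F v11 v12 v21 v22 d)"
    unfolding alpha_img_def O1_def by blast
  then have "alpha_img (O1 v11 v12 v21 v22 d) \<subseteq> Vcurve v11 v12 v21 v22 d"
    using HC_F_image by (rule order_trans)
  then show "CP2_topology closure_of (alpha_img (O1 v11 v12 v21 v22 d)) \<subseteq> Vcurve v11 v12 v21 v22 d"
    using closedin_Vcurve by (rule closure_of_minimal)
qed

end
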